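(* Let $\mathcal{D}=M_{n_1}(\mathbb{C})\oplus\cdots\oplus M_{n_k}(\mathbb{C})$, let $\mathcal{A}\subseteq\mathcal{D}$ be a CSL subalgebra, and let $\mathcal{B}$ be a complex algebra containing $\mathcal{D}$ as a subalgebra with the same unit $I$. If $\delta:\mathcal{A}\to\mathcal{B}$ is a linear map with $(m+n+l)\delta(A^2)=m\delta(A)A+nA\delta(A)+lA\delta(I)A$ for all $A\in\mathcal{A}$, then $\delta(AB)=\delta(A)B=A\delta(B)$ for all $A,B\in\mathcal{A}$.
   Context: Fixed integers $m,n,l\ge 0$ satisfy $m+l\ge1$ and $n+l\ge1$. A CSL subalgebra of $\mathcal{D}$ is a subalgebra of the form $\mathrm{alg}\mathcal{L}$ for a commutative lattice $\mathcal{L}$ of projections in the diagonal of $\mathcal{D}$ (with respect to a fixed system of matrix units); in particular it contains all diagonal matrix units $E_{ii}$ and is the linear span of the matrix units $E_{ij}$ it contains. *)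

theory Defs
  imports "HOL-Analysis.Analysis"
begin

text \<open>The algebra D = M_{n_1} + ... + M_{n_k} is realised as the block-diagonal
 matrices for a block labelling blk :: 'n => nat (indices with equal labels form a block).\<close>

definition blockdiag :: "('n::finite \<Rightarrow> nat) \<Rightarrow> (complex^'n^'n) set" where
  "blockdiag blk = {X. \<forall>i j. blk i \<noteq> blk j \<longrightarrow> X$i$j = 0}"

definition cmat_scale :: "complex \<Rightarrow> complex^'n^'n \<Rightarrow> complex^'n^'n" where
  "cmat_scale c X = (\<chi> i j. c * X$i$j)"

definition diag_proj :: "complex^'n^'n \<Rightarrow> bool" where
  "diag_proj P \<longleftrightarrow> (\<exists>S. P = (\<chi> i j. if i = j \<and> i \<in> S then 1 else 0))"

text \<open>A (commutative) lattice of diagonal projections: contains 0 and I, closed under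
 meet (P Q) and join (P + Q - P Q).\<close>
definition diag_proj_lattice :: "(complex^'n^'n) set \<Rightarrow> bool" where
  "diag_proj_lattice L \<longleftrightarrow> (\<forall>P\<in>L. diag_proj P) \<and> 0 \<in> L \<and> mat 1 \<in> L \<and>
     (\<forall>P\<in>L. \<forall>Q\<in>L. P ** Q \<in> L \<and> P + Q - P ** Q \<in> L)"

text \<open>alg L inside D: elements of D leaving every projection of L invariant.\<close>
definition alg_lat :: "(complex^'n^'n) set \<Rightarrow> (complex^'n^'n) set \<Rightarrow> (complex^'n^'n) set" where
  "alg_lat D L = {X \<in> D. \<forall>P\<in>L. (mat 1 - P) ** X ** P = 0}"

definition CSL_subalgebra :: "(complex^'n^'n) set \<Rightarrow> (complex^'n^'n) set \<Rightarrow> bool" where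
  "CSL_subalgebra D A \<longleftrightarrow> (\<exists>L. diag_proj_lattice L \<and> (\<forall>P\<in>L. P \<in> D) \<and> A = alg_lat D L)"

text \<open>A unital complex algebra structure on a ring 'b: a unital ring homomorphism
 psi from the complex numbers into the centre of 'b (scalar multiplication c.b = psi c * b).\<close>
definition complex_alg_str :: "(complex \<Rightarrow> 'b::ring_1) \<Rightarrow> bool" where
  "complex_alg_str psi \<longleftrightarrow> psi 1 = 1 \<and> (\<forall>a b. psi (a + b) = psi a + psi b) \<and>
     (\<forall>a b. psi (a * b) = psi a * psi b) \<and> (\<forall>a x. psi a * x = x * psi a)"

definition unital_subalg_embedding ::
  "(complex \<Rightarrow> 'b::ring_1) \<Rightarrow> (complex^'n^'n) set \<Rightarrow> (complex^'n^'n \<Rightarrow> 'b) \<Rightarrow> bool" where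
  "unital_subalg_embedding psi D phi \<longleftrightarrow> inj_on phi D \<and> phi (mat 1) = 1 \<and>
     (\<forall>X\<in>D. \<forall>Y\<in>D. phi (X + Y) = phi X + phi Y \<and> phi (X ** Y) = phi X * phi Y) \<and>
     (\<forall>c. \<forall>X\<in>D. phi (cmat_scale c X) = psi c * phi X)"

definition linear_on_into ::
  "(complex \<Rightarrow> 'b::ring_1) \<Rightarrow> (complex^'n^'n) set \<Rightarrow> (complex^'n^'n \<Rightarrow> 'b) \<Rightarrow> bool" where
  "linear_on_into psi A f \<longleftrightarrow> (\<forall>X\<in>A. \<forall>Y\<in>A. f (X + Y) = f X + f Y) \<and>
     (\<forall>c. \<forall>X\<in>A. f (cmat_scale c X) = psi c * f X)"

end

theory Submission
  imports Defs
begin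

text \<open>
  Write T = delta(I) (delta_one below).  For A in the CSL algebra, applying the
  identity to A and to A + I and subtracting gives the linearised identity
    (m+n+2l) delta(A) = (m+l) T A + (n+l) A T.
  For an idempotent P, compressing both identities to the corners (I-P)(.)P and P(.)(I-P)
  shows that these corners of T vanish, so T commutes with P.  A CSL subalgebra of the
  block-diagonal algebra is exactly the set of matrices supported on a preorder R (a
  "pattern algebra"), so it is spanned by matrix units E_ij with R i j, and each such unit is
  a difference of the idempotents E_ii + E_ij and E_ii.  Hence T commutes with the whole
  algebra, the linearised identity becomes delta(A) = T A, and the product rule follows.
\<close>

lemma of_nat_left_commute: "(x::'b::ring_1) * (of_nat a * y) = of_nat a * (x * y)"
  by (metis mult.assoc mult_of_nat_commute)

text \<open>Subtracting the identity at x from the identity at x + 1 (whose square term is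
  s + 2d + T) leaves a linear relation between d and the two products of T with x.\<close>

lemma identity_unit_shift:
  fixes d s T x :: "'b::ring_1"
  assumes at_x: "of_nat (m+n+l) * s = of_nat m * (d * x) + of_nat n * (x * d) + of_nat l * (x * T * x)"
    and at_x1: "of_nat (m+n+l) * (s + d + d + T)
       = of_nat m * ((d + T) * (x + 1)) + of_nat n * ((x + 1) * (d + T)) + of_nat l * ((x + 1) * T * (x + 1))"
  shows "of_nat (m+n+2*l) * d = of_nat (m+l) * (T * x) + of_nat (n+l) * (x * T)"
proof -
  have "of_nat (m+n+l) * (s + d + d + T) - of_nat (m+n+l) * s
      = of_nat m * ((d + T) * (x + 1)) + of_nat n * ((x + 1) * (d + T)) + of_nat l * ((x + 1) * T * (x + 1))
        - (of_nat m * (d * x) + of_nat n * (x * d) + of_nat l * (x * T * x))"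
    using at_x at_x1 by simp
  then show ?thesis by (simp add: algebra_simps mult_2)
qed

text \<open>If p is idempotent and the identity holds at p together with its linearisation, then
  T commutes with p: the corners q T p and p T q (q = 1 - p) are killed by the nonzero
  multiples m + l and n + l, provided the ring has no additive torsion.\<close>

lemma idempotent_commutes_with:
  fixes d T p :: "'b::ring_1"
  assumes no_torsion: "\<And>c (z::'b). c \<noteq> 0 \<Longrightarrow> of_nat c * z = 0 \<Longrightarrow> z = 0"
    and ml: "m + l \<noteq> 0" and nl: "n + l \<noteq> 0"
    and idem: "p * p = p"
    and shifted: "of_nat (m+n+2*l) * d = of_nat (m+l) * (T * p) + of_nat (n+l) * (p * T)"
    and at_p: "of_nat (m+n+l) * d = of_nat m * (d * p) + of_nat n * (p * d) + of_nat l * (p * T * p)"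
  shows "T * p = p * T"
proof -
  define q where "q = 1 - p"
  have qp: "q * p = 0" "q * (p * z) = 0" and pq: "p * q = 0" "p * (q * z) = 0" for z
    unfolding q_def by (simp_all add: algebra_simps idem flip: mult.assoc)
  have pp: "p * (p * z) = p * z" for z by (simp add: idem flip: mult.assoc)
  note simps = algebra_simps mult_2 of_nat_left_commute idem pp qp pq
  have "q * (of_nat (m+n+l) * d) * p = q * (of_nat m * (d * p) + of_nat n * (p * d) + of_nat l * (p * T * p)) * p"
    using at_p by simp
  then have "of_nat (n+l) * (q * d * p) = 0" by (simp add: simps)
  then have "q * d * p = 0" using no_torsion nl by blast
  moreover have "q * (of_nat (m+n+2*l) * d) * p = q * (of_nat (m+l) * (T * p) + of_nat (n+l) * (p * T)) * p"
    using shifted by simp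
  ultimately have "of_nat (m+l) * (q * T * p) = 0" by (simp add: simps)
  then have lower: "q * T * p = 0" using no_torsion ml by blast
  have "p * (of_nat (m+n+l) * d) * q = p * (of_nat m * (d * p) + of_nat n * (p * d) + of_nat l * (p * T * p)) * q"
    using at_p by simp
  then have "of_nat (m+l) * (p * d * q) = 0" by (simp add: simps)
  then have "p * d * q = 0" using no_torsion ml by blast
  moreover have "p * (of_nat (m+n+2*l) * d) * q = p * (of_nat (m+l) * (T * p) + of_nat (n+l) * (p * T)) * q"
    using shifted by simp
  ultimately have "of_nat (n+l) * (p * T * q) = 0" by (simp add: simps)
  then have upper: "p * T * q = 0" using no_torsion nl by blast
  from lower upper show ?thesis unfolding q_def by (simp add: algebra_simps)
qed

lemma complex_alg_str_of_nat:
  assumes "complex_alg_str psi"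
  shows "psi (of_nat k) = of_nat k"
proof (induction k)
  case 0
  have "psi 0 + psi 0 = psi 0 + 0"
    using assms unfolding complex_alg_str_def by (metis add_0 add_0_right)
  then show ?case by simp
next
  case (Suc k)
  have "psi (1 + of_nat k) = psi 1 + psi (of_nat k)" and "psi 1 = 1"
    using assms unfolding complex_alg_str_def by blast+
  with Suc show ?case by (simp add: add.commute)
qed

text \<open>A complex algebra has no additive torsion, since nonzero naturals are invertible.\<close>

lemma complex_alg_str_no_torsion:
  fixes psi :: "complex \<Rightarrow> 'b::ring_1" and z :: 'b
  assumes "complex_alg_str psi" "c \<noteq> 0" "of_nat c * z = 0"
  shows "z = 0"
proof -
  have "1 = psi (1 / of_nat c * of_nat c)" using assms(1,2) unfolding complex_alg_str_def by simp
  also have "\<dots> = psi (1 / of_nat c) * psi (of_nat c)"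
    using assms(1) unfolding complex_alg_str_def by blast
  also have "\<dots> = psi (1 / of_nat c) * of_nat c"
    by (simp add: complex_alg_str_of_nat[OF assms(1)])
  finally have "z = psi (1 / of_nat c) * (of_nat c * z)" by (simp flip: mult.assoc)
  with assms(3) show ?thesis by simp
qed

lemma additive_on_sum:
  fixes f :: "'a::comm_monoid_add \<Rightarrow> 'b::ab_group_add"
  assumes zero: "0 \<in> S" and add: "\<And>X Y. X \<in> S \<Longrightarrow> Y \<in> S \<Longrightarrow> X + Y \<in> S"
    and additive: "\<And>X Y. X \<in> S \<Longrightarrow> Y \<in> S \<Longrightarrow> f (X + Y) = f X + f Y"
    and "finite F" and "\<And>p. p \<in> F \<Longrightarrow> g p \<in> S"
  shows "sum g F \<in> S \<and> f (sum g F) = (\<Sum>p\<in>F. f (g p))"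
  using assms(4,5)
proof (induction F rule: finite_induct)
  case empty
  have "f 0 + f 0 = f 0 + 0" using additive[OF zero zero] by simp
  then show ?case using zero by simp
next
  case (insert p F)
  then show ?case using add additive by simp
qed

section \<open>Pattern algebras and matrix units\<close>

definition pattern_alg :: "('n::finite \<Rightarrow> 'n \<Rightarrow> bool) \<Rightarrow> ('a::zero^'n^'n) set" where
  "pattern_alg R = {X. \<forall>i j. \<not> R i j \<longrightarrow> X$i$j = 0}"

definition mat_unit :: "'n::finite \<Rightarrow> 'n \<Rightarrow> 'a::zero_neq_one^'n^'n" where
  "mat_unit i j = (\<chi> r c. if r = i \<and> c = j then 1 else 0)"

lemma matrix_entry: "(X ** Y)$i$j = (\<Sum>k\<in>UNIV. X$i$k * Y$k$j)"
  by (simp add: matrix_matrix_mult_def)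

lemma matrix_add_rdistrib: "((A::'a::semiring_1^'n::finite^'m) + B) ** C = A ** C + B ** C"
  by (simp add: vec_eq_iff matrix_entry distrib_right sum.distrib)

lemma blockdiag_eq_pattern_alg: "blockdiag blk = pattern_alg (\<lambda>i j. blk i = blk j)"
  unfolding blockdiag_def pattern_alg_def ..

lemma pattern_alg_mono: "(\<And>i j. R i j \<Longrightarrow> R' i j) \<Longrightarrow> pattern_alg R \<subseteq> pattern_alg R'"
  unfolding pattern_alg_def by blast

lemma pattern_alg_zero: "0 \<in> pattern_alg R"
  unfolding pattern_alg_def by simp

lemma pattern_alg_add:
  fixes X Y :: "'a::monoid_add^'n::finite^'n"
  shows "X \<in> pattern_alg R \<Longrightarrow> Y \<in> pattern_alg R \<Longrightarrow> X + Y \<in> pattern_alg R"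
  unfolding pattern_alg_def by simp

lemma pattern_alg_scale: "X \<in> pattern_alg R \<Longrightarrow> cmat_scale c X \<in> pattern_alg R"
  unfolding pattern_alg_def cmat_scale_def by simp

lemma pattern_alg_one: "reflp R \<Longrightarrow> mat 1 \<in> pattern_alg R"
  unfolding pattern_alg_def mat_def by (auto dest: reflpD)

lemma pattern_alg_mult:
  assumes "transp R" "X \<in> pattern_alg R" "Y \<in> pattern_alg R"
  shows "X ** Y \<in> pattern_alg R"
  unfolding pattern_alg_def mem_Collect_eq matrix_entry
proof (intro allI impI sum.neutral ballI)
  fix i j k assume "\<not> R i j"
  then have "\<not> R i k \<or> \<not> R k j" using assms(1) by (blast dest: transpD)
  then show "X$i$k * Y$k$j = 0" using assms(2,3) unfolding pattern_alg_def by auto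
qed

lemma mat_unit_in_pattern_alg: "mat_unit i j \<in> pattern_alg R \<longleftrightarrow> R i j"
  unfolding pattern_alg_def mat_unit_def by auto

lemma mat_unit_mult: "mat_unit i j ** mat_unit k l = (if j = k then mat_unit i l else 0)"
  by (auto simp: vec_eq_iff matrix_entry mat_unit_def if_distrib[of "\<lambda>x. x * _"] cong: if_cong)

lemma pattern_alg_span:
  assumes "X \<in> pattern_alg R"
  shows "X = (\<Sum>(i,j)\<in>{(i,j). R i j}. cmat_scale (X$i$j) (mat_unit i j))"
proof -
  have "(\<Sum>(i,j)\<in>{(i,j). R i j}. cmat_scale (X$i$j) (mat_unit i j))$r$c = X$r$c" for r c
  proof -
    have "(\<Sum>(i,j)\<in>{(i,j). R i j}. cmat_scale (X$i$j) (mat_unit i j))$r$c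
        = (\<Sum>p\<in>{(i,j). R i j}. if p = (r,c) then X$r$c else 0)"
      unfolding sum_component by (rule sum.cong) (auto simp: cmat_scale_def mat_unit_def split: if_splits)
    also have "\<dots> = X$r$c" using assms unfolding pattern_alg_def by auto
    finally show ?thesis .
  qed
  then show ?thesis by (simp add: vec_eq_iff)
qed

section \<open>CSL subalgebras are pattern algebras\<close>

definition coord_proj :: "'n::finite set \<Rightarrow> 'a::zero_neq_one^'n^'n" where
  "coord_proj S = (\<chi> i j. if i = j \<and> i \<in> S then 1 else 0)"

lemma diag_proj_iff: "diag_proj P \<longleftrightarrow> (\<exists>S. P = coord_proj S)"
  unfolding diag_proj_def coord_proj_def ..

lemma coord_proj_mult_left: "(coord_proj S ** X)$i$j = (if i \<in> S then X$i$j else (0::'a::semiring_1))"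
  by (simp add: matrix_entry coord_proj_def if_distrib[of "\<lambda>x. x * _"] cong: if_cong)

lemma coord_proj_mult_right: "(X ** coord_proj S)$i$j = (if j \<in> S then X$i$j else (0::'a::semiring_1))"
  by (simp add: matrix_entry coord_proj_def if_distrib[of "\<lambda>x. _ * x"] cong: if_cong conj_cong)

lemma one_minus_coord_proj: "mat 1 - coord_proj S = (coord_proj (- S) :: 'a::ring_1^'n::finite^'n)"
  by (simp add: vec_eq_iff mat_def coord_proj_def)

lemma coord_proj_invariant_iff:
  "(mat 1 - coord_proj S) ** X ** coord_proj S = (0::'a::ring_1^'n::finite^'n)
     \<longleftrightarrow> (\<forall>i j. i \<notin> S \<longrightarrow> j \<in> S \<longrightarrow> X$i$j = 0)"
  by (auto simp: vec_eq_iff one_minus_coord_proj coord_proj_mult_left coord_proj_mult_right)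

definition lattice_preorder :: "('n::finite \<Rightarrow> nat) \<Rightarrow> (complex^'n^'n) set \<Rightarrow> 'n \<Rightarrow> 'n \<Rightarrow> bool" where
  "lattice_preorder blk L i j \<longleftrightarrow> blk i = blk j \<and> (\<forall>S. coord_proj S \<in> L \<longrightarrow> j \<in> S \<longrightarrow> i \<in> S)"

lemma alg_lat_blockdiag_eq_pattern_alg:
  assumes "\<forall>P\<in>L. diag_proj P"
  shows "alg_lat (blockdiag blk) L = pattern_alg (lattice_preorder blk L)"
proof -
  have "(\<forall>P\<in>L. (mat 1 - P) ** X ** P = 0)
      \<longleftrightarrow> (\<forall>S. coord_proj S \<in> L \<longrightarrow> (mat 1 - coord_proj S) ** X ** coord_proj S = 0)" for X
    using assms by (auto simp: diag_proj_iff)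
  then have invariant_iff: "(\<forall>P\<in>L. (mat 1 - P) ** X ** P = 0)
      \<longleftrightarrow> (\<forall>S. coord_proj S \<in> L \<longrightarrow> (\<forall>i j. i \<notin> S \<longrightarrow> j \<in> S \<longrightarrow> X$i$j = 0))" for X
    by (simp only: coord_proj_invariant_iff)
  show ?thesis
    unfolding alg_lat_def blockdiag_eq_pattern_alg pattern_alg_def lattice_preorder_def invariant_iff
    by auto
qed

lemma CSL_subalgebra_is_pattern_alg:
  assumes "CSL_subalgebra (blockdiag blk) AA"
  obtains R where "AA = pattern_alg R" "reflp R" "transp R" "\<And>i j. R i j \<Longrightarrow> blk i = blk j"
proof -
  obtain L where "diag_proj_lattice L" "AA = alg_lat (blockdiag blk) L"
    using assms unfolding CSL_subalgebra_def by blast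
  then have "AA = pattern_alg (lattice_preorder blk L)"
    using alg_lat_blockdiag_eq_pattern_alg unfolding diag_proj_lattice_def by blast
  then show thesis by (rule that) (auto simp: reflp_def transp_def lattice_preorder_def)
qed

section \<open>Maps satisfying the (m,n,l) identity on a pattern algebra\<close>

text \<open>The setting of the theorem, with the CSL algebra replaced by the pattern algebra of a
  preorder R contained in the domain D of the unital embedding phi.\<close>

locale mnl_identity =
  fixes m n l :: nat
    and R :: "'n::finite \<Rightarrow> 'n \<Rightarrow> bool"
    and D :: "(complex^'n^'n) set"
    and psi :: "complex \<Rightarrow> 'b::ring_1"
    and phi delta :: "complex^'n^'n \<Rightarrow> 'b"
  assumes ml: "m + l \<ge> 1" and nl: "n + l \<ge> 1"
    and R_refl: "reflp R" and R_trans: "transp R"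
    and pattern_in_D: "pattern_alg R \<subseteq> D"
    and psi: "complex_alg_str psi"
    and phi: "unital_subalg_embedding psi D phi"
    and delta: "linear_on_into psi (pattern_alg R) delta"
    and identity: "\<forall>A\<in>pattern_alg R. of_nat (m + n + l) * delta (A ** A) =
            of_nat m * (delta A * phi A) + of_nat n * (phi A * delta A)
            + of_nat l * (phi A * delta (mat 1) * phi A)"
begin

abbreviation "alg_R \<equiv> pattern_alg R"

abbreviation "delta_one \<equiv> delta (mat 1)"

lemma one_in_alg_R: "mat 1 \<in> alg_R"
  using R_refl by (rule pattern_alg_one)

lemma phi_one: "phi (mat 1) = 1"
  using phi unfolding unital_subalg_embedding_def by blast

lemma phi_add: "X \<in> alg_R \<Longrightarrow> Y \<in> alg_R \<Longrightarrow> phi (X + Y) = phi X + phi Y"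
  using phi pattern_in_D unfolding unital_subalg_embedding_def by blast

lemma phi_mult: "X \<in> alg_R \<Longrightarrow> Y \<in> alg_R \<Longrightarrow> phi (X ** Y) = phi X * phi Y"
  using phi pattern_in_D unfolding unital_subalg_embedding_def by blast

lemma phi_scale: "X \<in> alg_R \<Longrightarrow> phi (cmat_scale c X) = psi c * phi X"
  using phi pattern_in_D unfolding unital_subalg_embedding_def by blast

lemma delta_add: "X \<in> alg_R \<Longrightarrow> Y \<in> alg_R \<Longrightarrow> delta (X + Y) = delta X + delta Y"
  using delta unfolding linear_on_into_def by blast

lemma identity_at: "A \<in> alg_R \<Longrightarrow> of_nat (m + n + l) * delta (A ** A) =
    of_nat m * (delta A * phi A) + of_nat n * (phi A * delta A) + of_nat l * (phi A * delta_one * phi A)"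
  using identity by blast

text \<open>The linearised identity, obtained by comparing the identity at A and at A + I.\<close>

lemma shifted_identity:
  assumes A: "A \<in> alg_R"
  shows "of_nat (m+n+2*l) * delta A = of_nat (m+l) * (delta_one * phi A) + of_nat (n+l) * (phi A * delta_one)"
proof (rule identity_unit_shift)
  show "of_nat (m+n+l) * delta (A ** A)
      = of_nat m * (delta A * phi A) + of_nat n * (phi A * delta A) + of_nat l * (phi A * delta_one * phi A)"
    using identity_at[OF A] .
  have alg_R_sq: "A ** A \<in> alg_R" using pattern_alg_mult[OF R_trans A A] .
  have square: "(A + mat 1) ** (A + mat 1) = A ** A + A + A + mat 1"
    by (simp add: matrix_add_ldistrib matrix_add_rdistrib add_ac)
  have sum1: "A ** A + A \<in> alg_R" and sum2: "A ** A + A + A \<in> alg_R"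
    using alg_R_sq A by (blast intro: pattern_alg_add)+
  have "delta ((A + mat 1) ** (A + mat 1)) = delta (A ** A) + delta A + delta A + delta_one"
    unfolding square delta_add[OF sum2 one_in_alg_R] delta_add[OF sum1 A] delta_add[OF alg_R_sq A] ..
  moreover have "delta (A + mat 1) = delta A + delta_one" using delta_add[OF A one_in_alg_R] .
  moreover have "phi (A + mat 1) = phi A + 1" using phi_add[OF A one_in_alg_R] phi_one by simp
  ultimately show "of_nat (m+n+l) * (delta (A ** A) + delta A + delta A + delta_one)
      = of_nat m * ((delta A + delta_one) * (phi A + 1)) + of_nat n * ((phi A + 1) * (delta A + delta_one))
        + of_nat l * ((phi A + 1) * delta_one * (phi A + 1))"
    using identity_at[OF pattern_alg_add[OF A one_in_alg_R]] by simp
qed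

lemma idempotent_commutes:
  assumes P: "P \<in> alg_R" and idem: "P ** P = P"
  shows "delta_one * phi P = phi P * delta_one"
proof (rule idempotent_commutes_with)
  show "\<And>c z. c \<noteq> 0 \<Longrightarrow> of_nat c * z = 0 \<Longrightarrow> z = (0::'b)"
    using complex_alg_str_no_torsion[OF psi] by blast
  show "m + l \<noteq> 0" "n + l \<noteq> 0" using ml nl by linarith+
  show "phi P * phi P = phi P" using phi_mult[OF P P] idem by simp
  show "of_nat (m+n+l) * delta P
      = of_nat m * (delta P * phi P) + of_nat n * (phi P * delta P) + of_nat l * (phi P * delta_one * phi P)"
    using identity_at[OF P] idem by simp
qed (rule shifted_identity[OF P])

text \<open>delta(I) commutes with the image of every matrix unit of the algebra: E_ii and
  E_ii + E_ij are idempotents.\<close>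

lemma mat_unit_commutes:
  assumes "R i j"
  shows "delta_one * phi (mat_unit i j) = phi (mat_unit i j) * delta_one"
proof (cases "i = j")
  case True
  then show ?thesis
    using assms by (simp add: idempotent_commutes mat_unit_in_pattern_alg mat_unit_mult)
next
  case False
  have Eii: "mat_unit i i \<in> alg_R" and Eij: "mat_unit i j \<in> alg_R"
    using assms R_refl by (simp_all add: mat_unit_in_pattern_alg reflpD)
  let ?Q = "mat_unit i i + mat_unit i j :: complex^'n^'n"
  have "?Q ** ?Q = ?Q"
    using False by (simp add: matrix_add_ldistrib matrix_add_rdistrib mat_unit_mult)
  then have "delta_one * phi ?Q = phi ?Q * delta_one"
    by (rule idempotent_commutes[OF pattern_alg_add[OF Eii Eij]])
  moreover have "delta_one * phi (mat_unit i i) = phi (mat_unit i i) * delta_one"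
    by (rule idempotent_commutes[OF Eii]) (simp add: mat_unit_mult)
  ultimately show ?thesis
    by (simp add: phi_add[OF Eii Eij] distrib_left distrib_right)
qed

text \<open>Expanding A in matrix units, delta(I) commutes with the image of every element; the
  scalars psi(c) are central.\<close>

lemma commutes:
  assumes A: "A \<in> alg_R"
  shows "delta_one * phi A = phi A * delta_one"
proof -
  define F where "F = {(i,j). R i j}"
  define g where "g = (\<lambda>(i,j). cmat_scale (A$i$j) (mat_unit i j :: complex^'n^'n))"
  have g_in: "g p \<in> alg_R" if "p \<in> F" for p
    using that unfolding F_def g_def by (auto intro: pattern_alg_scale simp: mat_unit_in_pattern_alg)
  have "finite F" by (simp add: F_def)
  then have phi_sum: "sum g F \<in> alg_R \<and> phi (sum g F) = (\<Sum>p\<in>F. phi (g p))"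
    using additive_on_sum[where S = alg_R and f = phi] pattern_alg_zero pattern_alg_add phi_add g_in
    by blast
  have "A = sum g F"
    using pattern_alg_span[OF A] unfolding F_def g_def .
  with phi_sum have "phi A = (\<Sum>p\<in>F. phi (g p))" by simp
  moreover have "delta_one * phi (g p) = phi (g p) * delta_one" if "p \<in> F" for p
  proof -
    obtain i j where p: "p = (i,j)" and "R i j" using \<open>p \<in> F\<close> unfolding F_def by blast
    then have E: "mat_unit i j \<in> alg_R" by (simp add: mat_unit_in_pattern_alg)
    have central: "psi c * x = x * psi c" for c x using psi unfolding complex_alg_str_def by blast
    have "delta_one * phi (g p) = delta_one * psi (A$i$j) * phi (mat_unit i j)"
      unfolding p g_def by (simp add: phi_scale[OF E] mult.assoc)
    also have "\<dots> = psi (A$i$j) * delta_one * phi (mat_unit i j)"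
      by (simp only: central[of "A$i$j" delta_one])
    also have "\<dots> = psi (A$i$j) * phi (mat_unit i j) * delta_one"
      by (simp add: mat_unit_commutes[OF \<open>R i j\<close>] mult.assoc)
    also have "\<dots> = phi (g p) * delta_one"
      unfolding p g_def by (simp add: phi_scale[OF E])
    finally show ?thesis .
  qed
  ultimately show ?thesis by (simp add: sum_distrib_left sum_distrib_right)
qed

text \<open>With commutation, the linearised identity reads (m+n+2l) delta(A) = (m+n+2l) delta(I) A.\<close>

lemma delta_eq_unit_times:
  assumes A: "A \<in> alg_R"
  shows "delta A = delta_one * phi A"
proof -
  have "of_nat (m+n+2*l) * delta A = of_nat (m+l) * (delta_one * phi A) + of_nat (n+l) * (delta_one * phi A)"
    using shifted_identity[OF A] commutes[OF A] by simp
  also have "\<dots> = of_nat ((m+l) + (n+l)) * (delta_one * phi A)"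
    by (simp only: of_nat_add distrib_right)
  also have "(m+l) + (n+l) = m+n+2*l" by simp
  finally have "of_nat (m+n+2*l) * (delta A - delta_one * phi A) = 0"
    by (simp add: right_diff_distrib)
  moreover have "m+n+2*l \<noteq> 0" using ml by linarith
  ultimately have "delta A - delta_one * phi A = 0"
    using complex_alg_str_no_torsion[OF psi] by blast
  then show ?thesis by simp
qed

text \<open>Since delta(A) = delta(I) A with delta(I) central for the algebra, delta satisfies
  both product rules.\<close>

theorem product_rule:
  assumes A: "A \<in> alg_R" and B: "B \<in> alg_R"
  shows "delta (A ** B) = delta A * phi B \<and> delta (A ** B) = phi A * delta B"
proof -
  have AB: "delta (A ** B) = delta_one * phi A * phi B"
    using delta_eq_unit_times[OF pattern_alg_mult[OF R_trans A B]] phi_mult[OF A B]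
    by (simp add: mult.assoc)
  show ?thesis
    unfolding AB delta_eq_unit_times[OF A] delta_eq_unit_times[OF B] commutes[OF A]
    by (simp add: mult.assoc)
qed

end

theorem lemma3p7:
  fixes m n l :: nat
    and blk :: "'n::finite \<Rightarrow> nat"
    and AA :: "(complex^'n^'n) set"
    and psi :: "complex \<Rightarrow> 'b::ring_1"
    and phi :: "complex^'n^'n \<Rightarrow> 'b"
    and delta :: "complex^'n^'n \<Rightarrow> 'b"
  assumes "m + l \<ge> 1" and "n + l \<ge> 1"
    and "CSL_subalgebra (blockdiag blk) AA"
    and "complex_alg_str psi"
    and "unital_subalg_embedding psi (blockdiag blk) phi"
    and "linear_on_into psi AA delta"
    and "\<forall>A\<in>AA. of_nat (m + n + l) * delta (A ** A) =
            of_nat m * (delta A * phi A) + of_nat n * (phi A * delta A)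
            + of_nat l * (phi A * delta (mat 1) * phi A)"
  shows "\<forall>A\<in>AA. \<forall>B\<in>AA. delta (A ** B) = delta A * phi B \<and> delta (A ** B) = phi A * delta B"
proof -
  obtain R where AA: "AA = pattern_alg R" and R: "reflp R" "transp R"
    and R_blk: "\<And>i j. R i j \<Longrightarrow> blk i = blk j"
    using CSL_subalgebra_is_pattern_alg[OF assms(3)] by blast
  have "pattern_alg R \<subseteq> blockdiag blk"
    unfolding blockdiag_eq_pattern_alg using R_blk by (rule pattern_alg_mono)
  then interpret mnl_identity m n l R "blockdiag blk" psi phi delta
    using assms R unfolding AA by unfold_locales simp_all
  show ?thesis unfolding AA using product_rule by blast
qed

end
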